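(* Let $G$ be a group of nilpotency class two, minimally generated by elements $x_1,\ldots,x_m$ of orders $1<2^{r_1}\leq 2^{r_2}\leq\cdots\leq 2^{r_m}$, respectively, and assume that $m>1$ and $r_m=r_{m-1}+1$. If $G$ is capable, then for some $i\in\{1,\ldots,m-1\}$ the commutator $[x_m,x_i]$ has order exactly $2^{r_{m-1}}$.
   Context: A group $G$ is called capable if there exists a group $K$ such that $K/Z(K)\cong G$. Commutators are $[x,y]=x^{-1}y^{-1}xy$. *)

theory Defs
  imports "HOL-Algebra.Algebra"
begin

definition center :: "('a, 'b) monoid_scheme \<Rightarrow> 'a set" where
  "center G = {z \<in> carrier G. \<forall>g \<in> carrier G. z \<otimes>\<^bsub>G\<^esub> g = g \<otimes>\<^bsub>G\<^esub> z}"

definition commutator :: "('a, 'b) monoid_scheme \<Rightarrow> 'a \<Rightarrow> 'a \<Rightarrow> 'a" where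
  "commutator G x y = inv\<^bsub>G\<^esub> x \<otimes>\<^bsub>G\<^esub> inv\<^bsub>G\<^esub> y \<otimes>\<^bsub>G\<^esub> x \<otimes>\<^bsub>G\<^esub> y"

definition nilpotent_class_two :: "('a, 'b) monoid_scheme \<Rightarrow> bool" where
  "nilpotent_class_two G \<longleftrightarrow> derived G (carrier G) \<subseteq> center G \<and> \<not> comm_group G"

definition capable_witness :: "('c, 'd) monoid_scheme \<Rightarrow> ('a, 'b) monoid_scheme \<Rightarrow> bool" where
  "capable_witness K G \<longleftrightarrow> group K \<and> (K Mod center K) \<cong> G"

end

theory Submission
  imports Defs "HOL-Computational_Algebra.Primes"
begin

(* Let phi : K -> G be the projection with kernel Z(K), write e = 2^r(m-1) = 2h, and suppose
   that no [x_m, x_i] with i < m has order e.  As [x_m, x_i]^e = [x_i^e, x_m]^-1 = 1, this means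
   [x_m, x_i]^h = 1.  Lift x_m to a and x_i to b.  As G has class two, every [c,k] with c = [a,b]
   is central in K, and so are c^h and b^e.  The class-two power formula
   (u c)^e = u^e c^e [c,u]^(e(e-1)/2), whose last factor vanishes because [c,u]^h = [c^h,u] = 1,
   applied to the conjugates b^a = b [b,a] and a^b = a c, gives first c^e = 1 and then
   (a^e)^b = a^e.  Hence a^e centralizes lifts of all generators, and therefore all of K, since
   lifts are unique up to Z(K).  So x_m^e = phi(a^e) = 1, contradicting ord x_m = 2e. *)

context group begin

lemma mult_inv_cancel [simp]: "x \<in> carrier G \<Longrightarrow> y \<in> carrier G \<Longrightarrow> x \<otimes> (inv x \<otimes> y) = y"
  by (simp add: m_assoc[symmetric])

lemma inv_mult_cancel [simp]: "x \<in> carrier G \<Longrightarrow> y \<in> carrier G \<Longrightarrow> inv x \<otimes> (x \<otimes> y) = y"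
  by (simp add: m_assoc[symmetric])

lemma commutator_closed [simp]:
  "u \<in> carrier G \<Longrightarrow> v \<in> carrier G \<Longrightarrow> commutator G u v \<in> carrier G"
  by (simp add: commutator_def)

lemma inv_commutator:
  "u \<in> carrier G \<Longrightarrow> v \<in> carrier G \<Longrightarrow> inv (commutator G u v) = commutator G v u"
  by (simp add: commutator_def inv_mult_group m_assoc)

lemma mult_eq_mult_commutator:
  "u \<in> carrier G \<Longrightarrow> v \<in> carrier G \<Longrightarrow> u \<otimes> v = v \<otimes> u \<otimes> commutator G u v"
  by (simp add: commutator_def m_assoc[symmetric]) (simp add: m_assoc)

lemma conj_eq_mult_commutator:
  "u \<in> carrier G \<Longrightarrow> v \<in> carrier G \<Longrightarrow> inv v \<otimes> u \<otimes> v = u \<otimes> commutator G u v"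
  by (simp add: commutator_def m_assoc[symmetric])

lemma commutator_mult_left:
  "u \<in> carrier G \<Longrightarrow> v \<in> carrier G \<Longrightarrow> w \<in> carrier G \<Longrightarrow>
   commutator G (u \<otimes> v) w = inv v \<otimes> commutator G u w \<otimes> v \<otimes> commutator G v w"
  by (simp add: commutator_def inv_mult_group m_assoc)

lemma commutator_pow_left:
  assumes u: "u \<in> carrier G" and v: "v \<in> carrier G"
    and comm: "commutator G u v \<otimes> u = u \<otimes> commutator G u v"
  shows "commutator G (u [^] (n::nat)) v = commutator G u v [^] n"
proof (induction n)
  case 0
  then show ?case using v by (simp add: commutator_def)
next
  case (Suc n)
  have "commutator G u v [^] n \<otimes> u = u \<otimes> commutator G u v [^] n"
    using group_commutes_pow[OF comm] u v by simp
  then have "inv u \<otimes> commutator G u v [^] n \<otimes> u = commutator G u v [^] n"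
    using u v by (simp add: m_assoc)
  then show ?case
    using commutator_mult_left[of "u [^] n" u v] Suc u v by simp
qed

lemma conj_pow:
  assumes u: "u \<in> carrier G" and v: "v \<in> carrier G"
  shows "(inv v \<otimes> u \<otimes> v) [^] (n::nat) = inv v \<otimes> u [^] n \<otimes> v"
proof (induction n)
  case 0
  then show ?case using v by simp
next
  case (Suc n)
  then show ?case using u v by (simp add: m_assoc)
qed

lemma pow_mult_swap_class_two:
  assumes a: "a \<in> carrier G" and c: "c \<in> carrier G" and d: "d \<in> carrier G"
    and ca: "c \<otimes> a = a \<otimes> c \<otimes> d" and dc: "d \<otimes> c = c \<otimes> d"
  shows "c [^] (n::nat) \<otimes> a = a \<otimes> c [^] n \<otimes> d [^] n"
proof (induction n)
  case 0
  then show ?case using a by simp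
next
  case (Suc n)
  have dnc: "d [^] n \<otimes> c = c \<otimes> d [^] n" using group_commutes_pow[OF dc d c] .
  have "c [^] Suc n \<otimes> a = c [^] n \<otimes> a \<otimes> c \<otimes> d" using ca a c d by (simp add: m_assoc)
  also have "\<dots> = a \<otimes> c [^] n \<otimes> (d [^] n \<otimes> c) \<otimes> d" using Suc a c d by (simp add: m_assoc)
  also have "\<dots> = a \<otimes> c [^] Suc n \<otimes> d [^] Suc n" using dnc a c d by (simp add: m_assoc)
  finally show ?case .
qed

lemma pow_mult_class_two:
  assumes a: "a \<in> carrier G" and c: "c \<in> carrier G" and d: "d \<in> carrier G"
    and ca: "c \<otimes> a = a \<otimes> c \<otimes> d" and da: "d \<otimes> a = a \<otimes> d" and dc: "d \<otimes> c = c \<otimes> d"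
  shows "(a \<otimes> c) [^] (n::nat) = a [^] n \<otimes> c [^] n \<otimes> d [^] (n * (n - 1) div 2)"
proof (induction n)
  case 0
  then show ?case by simp
next
  case (Suc n)
  let ?T = "n * (n - 1) div 2"
  have T: "Suc n * (Suc n - 1) div 2 = ?T + n"
    by (cases n) (auto simp: algebra_simps)
  have dTa: "d [^] ?T \<otimes> a = a \<otimes> d [^] ?T" using group_commutes_pow[OF da d a] .
  have dTc: "d [^] ?T \<otimes> c = c \<otimes> d [^] ?T" using group_commutes_pow[OF dc d c] .
  have dnc: "d [^] n \<otimes> c = c \<otimes> d [^] n" using group_commutes_pow[OF dc d c] .
  have "(a \<otimes> c) [^] Suc n = a [^] n \<otimes> (c [^] n \<otimes> (d [^] ?T \<otimes> a)) \<otimes> c"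
    using Suc a c d by (simp add: m_assoc)
  also have "\<dots> = a [^] n \<otimes> (c [^] n \<otimes> a) \<otimes> (d [^] ?T \<otimes> c)"
    using dTa a c d by (simp add: m_assoc)
  also have "\<dots> = a [^] n \<otimes> a \<otimes> c [^] n \<otimes> (d [^] n \<otimes> c) \<otimes> d [^] ?T"
    using pow_mult_swap_class_two[OF a c d ca dc] dTc a c d by (simp add: m_assoc)
  also have "\<dots> = a [^] Suc n \<otimes> c [^] Suc n \<otimes> (d [^] n \<otimes> d [^] ?T)"
    using dnc a c d by (simp add: m_assoc nat_pow_comm)
  finally show ?case using T d by (simp add: nat_pow_mult add.commute)
qed

lemma center_carrier: "z \<in> center G \<Longrightarrow> z \<in> carrier G"
  by (simp add: center_def)

lemma center_commute: "z \<in> center G \<Longrightarrow> g \<in> carrier G \<Longrightarrow> z \<otimes> g = g \<otimes> z"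
  by (simp add: center_def)

lemma inv_center: assumes z: "z \<in> center G" shows "inv z \<in> center G"
proof -
  have zc: "z \<in> carrier G" using z by (rule center_carrier)
  have "inv z \<otimes> g = g \<otimes> inv z" if g: "g \<in> carrier G" for g
  proof -
    have "inv z \<otimes> g = inv z \<otimes> (g \<otimes> z) \<otimes> inv z" using zc g by (simp add: m_assoc)
    also have "\<dots> = inv z \<otimes> (z \<otimes> g) \<otimes> inv z" using center_commute[OF z g] by simp
    also have "\<dots> = g \<otimes> inv z" using zc g by (simp add: m_assoc)
    finally show ?thesis .
  qed
  then show ?thesis using zc by (simp add: center_def)
qed

lemma mult_center:
  assumes z: "z \<in> center G" and w: "w \<in> center G" shows "z \<otimes> w \<in> center G"
proof -
  have zc: "z \<in> carrier G" "w \<in> carrier G" using z w by (auto simp: center_def)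
  have "z \<otimes> w \<otimes> g = g \<otimes> (z \<otimes> w)" if g: "g \<in> carrier G" for g
    using center_commute[OF z g] center_commute[OF w g] zc g by (metis m_assoc)
  then show ?thesis using zc by (simp add: center_def)
qed

lemma subgroup_center: "subgroup (center G) G"
proof (rule subgroupI)
  show "center G \<subseteq> carrier G" by (auto simp: center_def)
  show "center G \<noteq> {}" using one_closed by (auto simp: center_def)
qed (auto intro: inv_center mult_center)

lemma normal_center: "center G \<lhd> G"
  unfolding normal_inv_iff
proof (intro conjI subgroup_center ballI)
  fix g z assume g: "g \<in> carrier G" and z: "z \<in> center G"
  have "g \<otimes> z \<otimes> inv g = z \<otimes> g \<otimes> inv g" using center_commute[OF z g] by simp
  then show "g \<otimes> z \<otimes> inv g \<in> center G" using g center_carrier[OF z] z by (simp add: m_assoc)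
qed

lemma commutator_eq_one_if_center: "z \<in> center G \<Longrightarrow> v \<in> carrier G \<Longrightarrow> commutator G z v = \<one>"
  using center_commute[of z v] center_carrier[of z]
  by (simp add: commutator_def m_assoc[symmetric]) (simp add: m_assoc)

lemma subgroup_centralizer:
  assumes w: "w \<in> carrier G" shows "subgroup {k \<in> carrier G. w \<otimes> k = k \<otimes> w} G"
proof (rule subgroupI)
  fix k assume "k \<in> {k \<in> carrier G. w \<otimes> k = k \<otimes> w}"
  then have k: "k \<in> carrier G" and wk: "w \<otimes> k = k \<otimes> w" by auto
  have "w \<otimes> inv k = inv k \<otimes> (k \<otimes> w) \<otimes> inv k" using w k by (simp add: m_assoc)
  also have "\<dots> = inv k \<otimes> w" using wk[symmetric] w k by (simp add: m_assoc)
  finally show "inv k \<in> {k \<in> carrier G. w \<otimes> k = k \<otimes> w}" using k by simp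
next
  fix k l assume "k \<in> {k \<in> carrier G. w \<otimes> k = k \<otimes> w}" "l \<in> {k \<in> carrier G. w \<otimes> k = k \<otimes> w}"
  then show "k \<otimes> l \<in> {k \<in> carrier G. w \<otimes> k = k \<otimes> w}"
    using w by (auto simp: m_assoc[symmetric]) (simp add: m_assoc)
qed (use w in auto)

lemma conj_even_pow:
  assumes u: "u \<in> carrier G" and v: "v \<in> carrier G"
    and central: "commutator G (commutator G u v) u \<in> center G"
    and half: "commutator G u v [^] (h::nat) \<in> center G"
  shows "inv v \<otimes> u [^] (2 * h) \<otimes> v = u [^] (2 * h) \<otimes> commutator G u v [^] (2 * h)"
proof -
  define c where "c = commutator G u v"
  define d where "d = commutator G c u"
  have c: "c \<in> carrier G" and d: "d \<in> carrier G" using u v by (simp_all add: c_def d_def)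
  have dZ: "d \<in> center G" using central by (simp add: c_def d_def)
  have "d [^] h = commutator G (c [^] h) u"
    using commutator_pow_left[OF c u, of h] center_commute[OF dZ c] by (simp add: d_def)
  also have "\<dots> = \<one>" using commutator_eq_one_if_center[OF _ u] half by (simp add: c_def)
  finally have "d [^] (h * (2 * h - 1)) = \<one>" using d by (simp add: nat_pow_pow[symmetric])
  moreover have "2 * h * (2 * h - 1) div 2 = h * (2 * h - 1)" by simp
  ultimately have "(u \<otimes> c) [^] (2 * h) = u [^] (2 * h) \<otimes> c [^] (2 * h)"
    using pow_mult_class_two[OF u c d mult_eq_mult_commutator[OF c u, folded d_def]
        center_commute[OF dZ u] center_commute[OF dZ c], of "2 * h"] u c by simp
  then show ?thesis
    using conj_pow[OF u v] conj_eq_mult_commutator[OF u v] by (simp add: c_def)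
qed

lemma even_pow_commute:
  assumes a: "a \<in> carrier G" and b: "b \<in> carrier G"
    and central_ab: "commutator G (commutator G a b) a \<in> center G"
    and central_ba: "commutator G (commutator G b a) b \<in> center G"
    and half: "commutator G a b [^] (h::nat) \<in> center G"
    and b_pow: "b [^] (2 * h) \<in> center G"
  shows "a [^] (2 * h) \<otimes> b = b \<otimes> a [^] (2 * h)"
proof -
  have "commutator G b a [^] h \<in> center G"
    using inv_center[OF half] nat_pow_inv[of "commutator G a b" h] inv_commutator[OF a b] a b
    by simp
  then have "inv a \<otimes> b [^] (2 * h) \<otimes> a = b [^] (2 * h) \<otimes> commutator G b a [^] (2 * h)"
    using conj_even_pow[OF b a central_ba] by simp
  moreover have "inv a \<otimes> b [^] (2 * h) \<otimes> a = b [^] (2 * h)"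
    using center_commute[OF b_pow a] a b by (simp add: m_assoc)
  ultimately have "commutator G b a [^] (2 * h) = \<one>"
    using a b by simp
  then have "commutator G a b [^] (2 * h) = \<one>"
    using nat_pow_inv[of "commutator G b a" "2 * h"] inv_commutator[OF b a] a b by simp
  then have "inv b \<otimes> a [^] (2 * h) \<otimes> b = a [^] (2 * h)"
    using conj_even_pow[OF a b central_ab half] a by simp
  then have "b \<otimes> (inv b \<otimes> a [^] (2 * h) \<otimes> b) = b \<otimes> a [^] (2 * h)" by simp
  then show ?thesis using a b by (simp add: m_assoc)
qed

lemma commutator_in_center_if_class_two:
  assumes "nilpotent_class_two G" and u: "u \<in> carrier G" and v: "v \<in> carrier G"
  shows "commutator G u v \<in> center G"
proof -
  have "commutator G u v = inv u \<otimes> inv v \<otimes> inv (inv u) \<otimes> inv (inv v)"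
    using u v by (simp add: commutator_def)
  then have "commutator G u v \<in> derived_set G (carrier G)"
    using u v by (intro UN_I[OF inv_closed[OF u]] UN_I[OF inv_closed[OF v]]) simp
  then have "commutator G u v \<in> derived G (carrier G)"
    unfolding derived_def by (rule generate.incl)
  then show ?thesis using assms(1) unfolding nilpotent_class_two_def by blast
qed

lemma commutator_pow_eq_one:
  assumes g: "g \<in> carrier G" and s: "s \<in> carrier G"
    and central: "commutator G s g \<in> center G" and pow: "s [^] (n::nat) = \<one>"
  shows "commutator G g s [^] n = \<one>"
proof -
  have "commutator G s g [^] n = commutator G (s [^] n) g"
    using commutator_pow_left[OF s g] center_commute[OF central s] by simp
  also have "\<dots> = \<one>" using pow g by (simp add: commutator_def)
  finally show ?thesis
    using nat_pow_inv[of "commutator G s g" n] inv_commutator[OF s g] g s by simp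
qed

lemma pow_prime_power_eq_one_if_ord_ne:
  assumes p: "Factorial_Ring.prime (p::nat)" and g: "g \<in> carrier G"
    and pow: "g [^] (p ^ Suc k) = \<one>" and ord: "ord g \<noteq> p ^ Suc k"
  shows "g [^] (p ^ k) = \<one>"
proof -
  have "ord g dvd p ^ Suc k" using pow pow_eq_id[OF g] by blast
  then obtain i where "i \<le> Suc k" "ord g = p ^ i"
    using divides_primepow_nat[OF p] by blast
  with ord have "i \<le> k" by (auto simp: le_Suc_eq)
  then have "ord g dvd p ^ k" using \<open>ord g = p ^ i\<close> by (simp add: le_imp_power_dvd)
  then show ?thesis using pow_eq_id[OF g] by simp
qed

end

lemma quotient_iso_imp_hom_kernel:
  assumes N: "N \<lhd> G" and H: "group H" and iso: "(G Mod N) \<cong> H"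
  shows "\<exists>h. group_hom G H h \<and> h ` carrier G = carrier H \<and> kernel G H h = N"
proof -
  interpret N: normal N G by fact
  interpret Q: group "G Mod N" by (rule N.factorgroup_is_group)
  obtain f where f: "f \<in> iso (G Mod N) H" using iso unfolding is_iso_def by blast
  interpret f: group_hom "G Mod N" H f
    using H Q.group_axioms iso_imp_homomorphism[OF f] by (simp add: group_hom_def group_hom_axioms_def)
  have f_img: "f ` carrier (G Mod N) = carrier H" and f_inj: "inj_on f (carrier (G Mod N))"
    using f unfolding iso_iff by auto
  define h where "h = f \<circ> (\<lambda>a. N #>\<^bsub>G\<^esub> a)"
  have "group_hom G H h"
    using H N.is_group hom_compose[OF N.r_coset_hom_Mod iso_imp_homomorphism[OF f]]
    by (simp add: group_hom_def group_hom_axioms_def h_def)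
  moreover have "h ` carrier G = carrier H"
    using f_img unfolding h_def image_comp[symmetric] carrier_FactGroup .
  moreover have "kernel G H h = N"
  proof -
    have "h a = \<one>\<^bsub>H\<^esub> \<longleftrightarrow> a \<in> N" if a: "a \<in> carrier G" for a
    proof -
      have "N #>\<^bsub>G\<^esub> a \<in> carrier (G Mod N)" using a unfolding carrier_FactGroup by (rule imageI)
      then have "h a = \<one>\<^bsub>H\<^esub> \<longleftrightarrow> N #>\<^bsub>G\<^esub> a = \<one>\<^bsub>G Mod N\<^esub>"
        using inj_on_eq_iff[OF f_inj _ Q.one_closed] f.hom_one by (simp add: h_def)
      also have "\<dots> \<longleftrightarrow> a \<in> N"
        using N.coset_join1[OF _ a N.subgroup_axioms] N.rcos_const[OF N.is_group] by auto
      finally show ?thesis .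
    qed
    then show ?thesis using N.subset unfolding kernel_def by blast
  qed
  ultimately show ?thesis by blast
qed

context group_hom begin

lemma hom_commutator:
  "u \<in> carrier G \<Longrightarrow> v \<in> carrier G \<Longrightarrow> h (commutator G u v) = commutator H (h u) (h v)"
  by (simp add: commutator_def)

lemma commutator_in_center_if_hom_in_center:
  assumes ker: "kernel G H h \<subseteq> center G"
    and u: "u \<in> carrier G" and hu: "h u \<in> center H" and v: "v \<in> carrier G"
  shows "commutator G u v \<in> center G"
proof -
  have "h (commutator G u v) = \<one>\<^bsub>H\<^esub>"
    using hom_commutator[OF u v] H.commutator_eq_one_if_center[OF hu] v by simp
  then show ?thesis using ker u v unfolding kernel_def by auto
qed

lemma center_if_commutes_with_lifts:
  assumes ker: "kernel G H h \<subseteq> center G" and gen: "generate H S = carrier H"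
    and w: "w \<in> carrier G"
    and lifts: "\<And>s. s \<in> S \<Longrightarrow> \<exists>k \<in> carrier G. h k = s \<and> w \<otimes> k = k \<otimes> w"
  shows "w \<in> center G"
proof -
  define C where "C = {k \<in> carrier G. w \<otimes> k = k \<otimes> w}"
  have C: "subgroup C G" unfolding C_def using G.subgroup_centralizer[OF w] .
  have "S \<subseteq> h ` C" using lifts unfolding C_def by fastforce
  then have "generate H S \<subseteq> h ` C"
    by (rule H.generate_subgroup_incl[OF _ subgroup_img_is_subgroup[OF C]])
  then have img: "carrier H \<subseteq> h ` C" unfolding gen .
  have "w \<otimes> k = k \<otimes> w" if k: "k \<in> carrier G" for k
  proof -
    have "h k \<in> h ` C" using img hom_closed[OF k] by blast
    then obtain k' where k': "k' \<in> carrier G" "w \<otimes> k' = k' \<otimes> w" "h k' = h k"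
      unfolding C_def by auto
    define z where "z = inv k' \<otimes> k"
    have zc: "z \<in> carrier G" using k k'(1) by (simp add: z_def)
    have "h z = \<one>\<^bsub>H\<^esub>" using k k' by (simp add: z_def)
    then have z: "z \<in> center G" using ker zc unfolding kernel_def by blast
    have "w \<otimes> (k' \<otimes> z) = k' \<otimes> w \<otimes> z"
      using k'(2) w k'(1) zc by (simp add: G.m_assoc[symmetric])
    also have "\<dots> = k' \<otimes> z \<otimes> w"
      using G.center_commute[OF z w] w k'(1) zc by (simp add: G.m_assoc)
    finally show ?thesis using k k'(1) by (simp add: z_def)
  qed
  then show ?thesis using w by (simp add: center_def)
qed

lemma pow_eq_one_if_center_quotient:
  assumes ker: "kernel G H h = center G" and surj: "h ` carrier G = carrier H"
    and class_two: "\<And>u v. u \<in> carrier H \<Longrightarrow> v \<in> carrier H \<Longrightarrow> commutator H u v \<in> center H"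
    and gen: "generate H (insert g S) = carrier H" and g: "g \<in> carrier H" and S: "S \<subseteq> carrier H"
    and pow: "\<And>s. s \<in> S \<Longrightarrow> s [^]\<^bsub>H\<^esub> (2 * n) = \<one>\<^bsub>H\<^esub>"
    and comm: "\<And>s. s \<in> S \<Longrightarrow> commutator H g s [^]\<^bsub>H\<^esub> (n::nat) = \<one>\<^bsub>H\<^esub>"
  shows "g [^]\<^bsub>H\<^esub> (2 * n) = \<one>\<^bsub>H\<^esub>"
proof -
  have in_center: "k \<in> center G" if "k \<in> carrier G" "h k = \<one>\<^bsub>H\<^esub>" for k
    using ker that unfolding kernel_def by blast
  obtain a where a: "a \<in> carrier G" "h a = g" using g unfolding surj[symmetric] by blast
  have "\<exists>k \<in> carrier G. h k = s \<and> a [^] (2 * n) \<otimes> k = k \<otimes> a [^] (2 * n)"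
    if s: "s \<in> insert g S" for s
  proof (cases "s = g")
    case True
    then show ?thesis using a G.nat_pow_comm[of a "2 * n" 1] by (intro bexI[of _ a]) simp_all
  next
    case False
    then have sS: "s \<in> S" using s by simp
    obtain b where b: "b \<in> carrier G" "h b = s" using sS S unfolding surj[symmetric] by blast
    have hab: "h (commutator G a b) \<in> center H" and hba: "h (commutator G b a) \<in> center H"
      using class_two[of g s] class_two[of s g] hom_commutator a b g sS S by auto
    have "commutator G (commutator G a b) a \<in> center G"
      using commutator_in_center_if_hom_in_center[OF _ _ hab a(1)] ker a b by simp
    moreover have "commutator G (commutator G b a) b \<in> center G"
      using commutator_in_center_if_hom_in_center[OF _ _ hba b(1)] ker a b by simp
    moreover have "commutator G a b [^] n \<in> center G"
      using in_center[of "commutator G a b [^] n"] hom_commutator a b comm[OF sS]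
      by (simp add: hom_nat_pow)
    moreover have "b [^] (2 * n) \<in> center G"
      using in_center[of "b [^] (2 * n)"] b pow[OF sS] by (simp add: hom_nat_pow)
    ultimately have "a [^] (2 * n) \<otimes> b = b \<otimes> a [^] (2 * n)"
      using G.even_pow_commute[OF a(1) b(1)] by blast
    then show ?thesis using b by blast
  qed
  then have "a [^] (2 * n) \<in> center G"
    using center_if_commutes_with_lifts[OF _ gen] ker a by simp
  then have "h (a [^] (2 * n)) = \<one>\<^bsub>H\<^esub>" using ker unfolding kernel_def by blast
  then show ?thesis using a by (simp add: hom_nat_pow)
qed

lemma commutator_ord_if_center_quotient:
  assumes ker: "kernel G H h = center G" and surj: "h ` carrier G = carrier H"
    and class_two: "\<And>u v. u \<in> carrier H \<Longrightarrow> v \<in> carrier H \<Longrightarrow> commutator H u v \<in> center H"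
    and gen: "generate H (insert g S) = carrier H" and g: "g \<in> carrier H" and S: "S \<subseteq> carrier H"
    and ord_S: "\<And>s. s \<in> S \<Longrightarrow> H.ord s dvd 2 ^ Suc k"
    and ord_g: "H.ord g = 2 ^ Suc (Suc k)"
  shows "\<exists>s \<in> S. H.ord (commutator H g s) = 2 ^ Suc k"
proof (rule ccontr)
  assume no_commutator: "\<not> ?thesis"
  have pow: "s [^]\<^bsub>H\<^esub> ((2::nat) * 2 ^ k) = \<one>\<^bsub>H\<^esub>" if s: "s \<in> S" for s
    using H.pow_eq_id ord_S[OF s] s S by auto
  have comm: "commutator H g s [^]\<^bsub>H\<^esub> ((2::nat) ^ k) = \<one>\<^bsub>H\<^esub>" if s: "s \<in> S" for s
  proof -
    have sH: "s \<in> carrier H" using s S by blast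
    have "commutator H g s [^]\<^bsub>H\<^esub> ((2::nat) ^ Suc k) = \<one>\<^bsub>H\<^esub>"
      using H.commutator_pow_eq_one[OF g sH class_two[OF sH g]] pow[OF s] by simp
    then show ?thesis
      using H.pow_prime_power_eq_one_if_ord_ne[OF two_is_prime_nat] no_commutator s sH g by auto
  qed
  have "g [^]\<^bsub>H\<^esub> ((2::nat) * 2 ^ k) = \<one>\<^bsub>H\<^esub>"
    by (rule pow_eq_one_if_center_quotient[OF ker surj class_two gen g S pow comm])
  moreover have "\<not> H.ord g dvd 2 * 2 ^ k" using ord_g by simp
  ultimately show False using H.pow_eq_id[OF g] by simp
qed

end

theorem theorem2p3:
  fixes G :: "('a, 'b) monoid_scheme" and x :: "nat \<Rightarrow> 'a" and r :: "nat \<Rightarrow> nat" and m :: nat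
  assumes "group G"
    and "nilpotent_class_two G"
    and "\<forall>i \<in> {1..m}. x i \<in> carrier G"
    and "generate G (x ` {1..m}) = carrier G"
    and "\<forall>j \<in> {1..m}. generate G (x ` ({1..m} - {j})) \<noteq> carrier G"
    and "\<forall>i \<in> {1..m}. group.ord G (x i) = 2 ^ r i"
    and "1 < (2::nat) ^ r 1"
    and "\<forall>i j. 1 \<le> i \<and> i \<le> j \<and> j \<le> m \<longrightarrow> (2::nat) ^ r i \<le> 2 ^ r j"
    and "m > 1"
    and "r m = r (m - 1) + 1"
    and "\<exists>K :: 'c monoid. capable_witness K G"
  shows "\<exists>i \<in> {1..m - 1}. group.ord G (commutator G (x m) (x i)) = 2 ^ r (m - 1)"
proof -
  interpret G: group G by fact
  have x: "x i \<in> carrier G" and ord: "G.ord (x i) = 2 ^ r i" if "i \<in> {1..m}" for i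
    using assms(3,6) that by blast+
  have r_mono: "r i \<le> r (m - 1)" if "i \<in> {1..m - 1}" for i
    using assms(8) that by auto
  obtain k where k: "r (m - 1) = Suc k"
    using r_mono[of 1] assms(7,9) by (cases "r (m - 1)") auto
  have m: "m \<in> {1..m}" and "{1..m} = insert m {1..m - 1}" using assms(9) by auto
  then have gens: "x ` {1..m} = insert (x m) (x ` {1..m - 1})" by (simp only: image_insert)
  obtain K :: "'c monoid" and \<phi> where
    \<phi>: "group_hom K G \<phi>" "\<phi> ` carrier K = carrier G" "kernel K G \<phi> = center K"
    using assms(11) quotient_iso_imp_hom_kernel[OF group.normal_center assms(1)]
    unfolding capable_witness_def by blast
  have "\<exists>s \<in> x ` {1..m - 1}. G.ord (commutator G (x m) s) = 2 ^ Suc k"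
  proof (rule group_hom.commutator_ord_if_center_quotient[OF \<phi>(1,3,2)])
    show "commutator G u v \<in> center G" if "u \<in> carrier G" "v \<in> carrier G" for u v
      using G.commutator_in_center_if_class_two[OF assms(2) that] .
    show "generate G (insert (x m) (x ` {1..m - 1})) = carrier G" using assms(4) gens by simp
    show "x ` {1..m - 1} \<subseteq> carrier G" using x by force
    show "G.ord s dvd 2 ^ Suc k" if "s \<in> x ` {1..m - 1}" for s
      using that ord r_mono k by (force simp: le_imp_power_dvd simp del: power_Suc)
    show "G.ord (x m) = 2 ^ Suc (Suc k)" using ord[OF m] assms(10) k by simp
  qed (use x m in auto)
  then show ?thesis using k by auto
qed

end
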